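(* Let $Y$ be a sofic shift and $(G,\mathcal L)$ the follower set graph of $Y$. Then the future cover $(\mathbb K(Y),L_{\mathbb K(Y)})$ of $Y$ is isomorphic, as a labeled graph, to $(G_{reg},\mathcal L)$.
   Context: Let $Y\subseteq A^{\mathbb Z}$ be a sofic shift, $Y[0,\infty)=\{y_{[0,\infty)}:y\in Y\}$, $\mathbb W(Y)$ its set of words. For a word $w$ let $F(w)=\{z\in Y[0,\infty): wz\in Y[0,\infty)\}$, and for $y\in Y$ let $F(y)=\{z\in Y[0,\infty): y_{(-\infty,-1]}z\in Y\}$. The follower set graph $(G,\mathcal L)$ (as in Lind–Marcus) has as vertices the distinct sets $F(w)$, $w$ a word of $Y$, and an edge labeled $a$ from $F(w)$ to $F(wa)$ whenever $wa\in\mathbb W(Y)$ (one edge per vertex pair and label). For a labeled graph $(H,L_H)$ with edge shift $X_H$, follower set of a vertex: $f_H(v)=\{L_H(x): x$ a right-infinite path starting at $v\}$. A vertex $v$ is regular if there is a bi-infinite path $z\in X_H$ such that the edge $z_{-1}$ ends at $v$ and $f_H(v)=F(L_H(z))$. For right-resolving $(H,L_H)$ (distinct edges with common source have distinct labels), $(H_{reg},L_H)$ is the labeled subgraph whose vertices are the regular vertices and whose edges are the edges with source a regular vertex. The future cover $(\mathbb K(Y),L_{\mathbb K(Y)})$ is the labeled graph with vertices the distinct sets $F(y)$, $y\in Y$, and an edge labeled $a\in A$ from $F(y)$ to $F(z)$ exactly when $F(z)=\{w\in A^{\mathbb N}: aw\in F(y)\}$ (one edge per such pair and label). *)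

theory Defs
  imports Main
begin

(* A labeled graph is a vertex set V :: 'v set together with an
   edge set E :: ('v * 'a * 'v) set of triples (source, label, target); there is
   at most one edge per vertex pair and label. *)

definition right_part :: "(int \<Rightarrow> 'a) \<Rightarrow> nat \<Rightarrow> 'a" where
  "right_part y = (\<lambda>n. y (int n))"

definition Yplus :: "(int \<Rightarrow> 'a) set \<Rightarrow> (nat \<Rightarrow> 'a) set" where
  "Yplus Y = right_part ` Y"

definition occurs :: "'a list \<Rightarrow> (int \<Rightarrow> 'a) \<Rightarrow> bool" where
  "occurs w y \<longleftrightarrow> (\<exists>i::int. \<forall>k<length w. y (i + int k) = w ! k)"

definition words :: "(int \<Rightarrow> 'a) set \<Rightarrow> 'a list set" where
  "words Y = {w. \<exists>y\<in>Y. occurs w y}"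

definition cat :: "'a list \<Rightarrow> (nat \<Rightarrow> 'a) \<Rightarrow> nat \<Rightarrow> 'a" where
  "cat w z n = (if n < length w then w ! n else z (n - length w))"

definition Fw :: "(int \<Rightarrow> 'a) set \<Rightarrow> 'a list \<Rightarrow> (nat \<Rightarrow> 'a) set" where
  "Fw Y w = {z \<in> Yplus Y. cat w z \<in> Yplus Y}"

definition glue :: "(int \<Rightarrow> 'a) \<Rightarrow> (nat \<Rightarrow> 'a) \<Rightarrow> int \<Rightarrow> 'a" where
  "glue y z i = (if i < 0 then y i else z (nat i))"

definition Fy :: "(int \<Rightarrow> 'a) set \<Rightarrow> (int \<Rightarrow> 'a) \<Rightarrow> (nat \<Rightarrow> 'a) set" where
  "Fy Y y = {z \<in> Yplus Y. glue y z \<in> Y}"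

definition edge_shift :: "('v \<times> 'a \<times> 'v) set \<Rightarrow> (int \<Rightarrow> 'v \<times> 'a \<times> 'v) set" where
  "edge_shift E = {z. \<forall>i. z i \<in> E \<and> snd (snd (z i)) = fst (z (i + 1))}"

definition label_seq :: "(int \<Rightarrow> 'v \<times> 'a \<times> 'v) \<Rightarrow> int \<Rightarrow> 'a" where
  "label_seq z = (\<lambda>i. fst (snd (z i)))"

(* sofic shift: the set of label sequences of bi-infinite paths of a finite labeled graph
   (Lind--Marcus); vertices are taken to be natural numbers w.l.o.g. *)
definition sofic :: "(int \<Rightarrow> 'a) set \<Rightarrow> bool" where
  "sofic Y \<longleftrightarrow> (\<exists>E :: (nat \<times> 'a \<times> nat) set. finite E \<and> Y = label_seq ` edge_shift E)"

definition rpath :: "('v \<times> 'a \<times> 'v) set \<Rightarrow> (nat \<Rightarrow> 'v \<times> 'a \<times> 'v) \<Rightarrow> bool" where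
  "rpath E p \<longleftrightarrow> (\<forall>n. p n \<in> E \<and> snd (snd (p n)) = fst (p (Suc n)))"

definition fH :: "('v \<times> 'a \<times> 'v) set \<Rightarrow> 'v \<Rightarrow> (nat \<Rightarrow> 'a) set" where
  "fH E v = {(\<lambda>n. fst (snd (p n))) | p. rpath E p \<and> fst (p 0) = v}"

definition regular :: "(int \<Rightarrow> 'a) set \<Rightarrow> 'v set \<Rightarrow> ('v \<times> 'a \<times> 'v) set \<Rightarrow> 'v \<Rightarrow> bool" where
  "regular Y V E v \<longleftrightarrow> v \<in> V \<and>
     (\<exists>z \<in> edge_shift E. snd (snd (z (-1))) = v \<and> fH E v = Fy Y (label_seq z))"

definition reg_vertices :: "(int \<Rightarrow> 'a) set \<Rightarrow> 'v set \<Rightarrow> ('v \<times> 'a \<times> 'v) set \<Rightarrow> 'v set" where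
  "reg_vertices Y V E = {v. regular Y V E v}"

definition reg_edges :: "(int \<Rightarrow> 'a) set \<Rightarrow> 'v set \<Rightarrow> ('v \<times> 'a \<times> 'v) set \<Rightarrow> ('v \<times> 'a \<times> 'v) set" where
  "reg_edges Y V E = {e \<in> E. fst e \<in> reg_vertices Y V E}"

definition fsg_vertices :: "(int \<Rightarrow> 'a) set \<Rightarrow> (nat \<Rightarrow> 'a) set set" where
  "fsg_vertices Y = Fw Y ` words Y"

definition fsg_edges :: "(int \<Rightarrow> 'a) set \<Rightarrow> ((nat \<Rightarrow> 'a) set \<times> 'a \<times> (nat \<Rightarrow> 'a) set) set" where
  "fsg_edges Y = {(Fw Y w, a, Fw Y (w @ [a])) | w a. w @ [a] \<in> words Y}"

definition fc_vertices :: "(int \<Rightarrow> 'a) set \<Rightarrow> (nat \<Rightarrow> 'a) set set" where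
  "fc_vertices Y = Fy Y ` Y"

definition fc_edges :: "(int \<Rightarrow> 'a) set \<Rightarrow> ((nat \<Rightarrow> 'a) set \<times> 'a \<times> (nat \<Rightarrow> 'a) set) set" where
  "fc_edges Y = {(Fy Y y, a, Fy Y z) | y z a. y \<in> Y \<and> z \<in> Y \<and>
                    Fy Y z = {w. cat [a] w \<in> Fy Y y}}"

definition lg_iso :: "'v set \<Rightarrow> ('v \<times> 'a \<times> 'v) set \<Rightarrow> 'w set \<Rightarrow> ('w \<times> 'a \<times> 'w) set \<Rightarrow> bool" where
  "lg_iso V1 E1 V2 E2 \<longleftrightarrow>
     E1 \<subseteq> V1 \<times> UNIV \<times> V1 \<and> E2 \<subseteq> V2 \<times> UNIV \<times> V2 \<and>
     (\<exists>\<phi>. bij_betw \<phi> V1 V2 \<and> bij_betw (\<lambda>(u, a, v). (\<phi> u, a, \<phi> v)) E1 E2)"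

end

theory Submission
  imports Defs "HOL-Library.Diagonal_Subsequence" "HOL-Library.Countable"
    "HOL-Library.FuncSet" "HOL-Library.Infinite_Set"
begin

(* The isomorphism is the identity map: the regular part of the follower set graph G has
   exactly the vertices F(y) and the edges of the future cover.
   Since Y is sofic there are only finitely many follower sets F(w), so the decreasing sequence
   F(y_[-n,-1]) is eventually constant, and by compactness of Y its limit is F(y); hence every
   F(y) is a vertex of G.  Compactness also shows that every vertex F(w) of G has f_G(F(w)) = F(w)
   and that the labels of every bi-infinite path of G form a point of Y, so the regular vertices
   are precisely the sets F(y).  The edges then match because F(wa) = {z. az \<in> F(w)}. *)

lemma pointwise_convergent_subseq_finite_range:
  fixes f :: "nat \<Rightarrow> 'i::countable \<Rightarrow> 'b"
  assumes "finite S" and "\<And>n i. f n i \<in> S"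
  obtains r p where "strict_mono r" and "\<And>i. \<forall>\<^sub>F n in sequentially. f (r n) i = p i"
proof -
  define B where "B k = (to_nat :: 'i \<Rightarrow> nat) -` {..k}" for k
  have finite_B: "finite (B k)" for k
    unfolding B_def by (rule finite_vimageI) auto
  interpret subseqs "\<lambda>k s. \<forall>n. \<forall>i\<in>B k. f (s n) i = f (s 0) i"
  proof
    fix k and s :: "nat \<Rightarrow> nat"
    have "finite (range (\<lambda>n. restrict (f (s n)) (B k)))"
      by (rule finite_subset[OF _ finite_PiE[of "B k" "\<lambda>_. S"]]) (auto simp: assms finite_B)
    then obtain g where "infinite {n. restrict (f (s n)) (B k) = g}"
      by (rule inf_img_fin_domE') (auto simp: vimage_def)
    then obtain r :: "nat \<Rightarrow> nat"
      where "strict_mono r" and r_g: "\<forall>n. restrict (f (s (r n))) (B k) = g"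
      using infinite_enumerate by blast
    have "f (s (r n)) i = f (s (r 0)) i" if "i \<in> B k" for n i
      using that r_g by (metis restrict_apply')
    with \<open>strict_mono r\<close>
    show "\<exists>r :: nat \<Rightarrow> nat. strict_mono r \<and> (\<forall>n. \<forall>i\<in>B k. f ((s \<circ> r) n) i = f ((s \<circ> r) 0) i)"
      by auto
  qed
  have stable: "\<forall>n. \<forall>i\<in>B k. f ((s \<circ> r) n) i = f ((s \<circ> r) 0) i"
    if "\<forall>n. \<forall>i\<in>B k. f (s n) i = f (s 0) i" for k s and r :: "nat \<Rightarrow> nat"
  proof (intro allI ballI)
    fix n i assume "i \<in> B k"
    with that have "f (s (r n)) i = f (s 0) i" and "f (s (r 0)) i = f (s 0) i"
      by blast+
    then show "f ((s \<circ> r) n) i = f ((s \<circ> r) 0) i"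
      by simp
  qed
  define p where "p i = f (diagseq (Suc (to_nat i))) i" for i
  have "\<forall>\<^sub>F n in sequentially. f (diagseq n) i = p i" for i
  proof (rule eventually_sequentiallyI)
    fix n assume "Suc (to_nat i) \<le> n"
    then obtain m where m: "n = Suc (to_nat i) + m"
      using le_Suc_ex by blast
    have "i \<in> B (to_nat i)"
      by (simp add: B_def)
    with diagseq_holds[of "to_nat i", OF stable]
    have "f ((diagseq \<circ> (+) (Suc (to_nat i))) m) i = f ((diagseq \<circ> (+) (Suc (to_nat i))) 0) i"
      by blast
    then show "f (diagseq n) i = p i"
      by (simp add: m p_def)
  qed
  with subseq_diagseq show thesis
    by (rule that)
qed

lemma decseq_finite_range_eventually_eq_INF:
  fixes f :: "nat \<Rightarrow> 'b::complete_lattice"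
  assumes "decseq f" and "finite (range f)"
  shows "\<forall>\<^sub>F n in sequentially. f n = (INF m. f m)"
proof -
  obtain m where "m \<in> range f" and minimal: "\<forall>x\<in>range f. x \<le> m \<longrightarrow> m = x"
    using finite_has_minimal[OF assms(2)] by auto
  then obtain N where N: "m = f N"
    by blast
  have eq: "f n = f N" if "N \<le> n" for n
  proof -
    have "f n \<le> m"
      using decseqD[OF assms(1) that] N by simp
    then show ?thesis
      using minimal N by auto
  qed
  have lower: "f N \<le> f n" for n
  proof (cases "n \<le> N")
    case True
    then show ?thesis
      by (rule decseqD[OF assms(1)])
  next
    case False
    then show ?thesis
      using eq[of n] by simp
  qed
  have "(INF n. f n) = f N"
  proof (rule antisym)
    show "(INF n. f n) \<le> f N"
      by (rule INF_lower) simp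
    show "f N \<le> (INF n. f n)"
      by (rule INF_greatest) (rule lower)
  qed
  then have "f n = (INF m. f m)" if "N \<le> n" for n
    using eq[OF that] by simp
  then show ?thesis
    by (rule eventually_sequentiallyI)
qed

lemma pointwise_limit_mem_edge_shift:
  assumes paths: "\<And>n. q n \<in> edge_shift E"
    and conv: "\<And>i. \<forall>\<^sub>F n in sequentially. q n i = p i"
  shows "p \<in> edge_shift E"
  unfolding edge_shift_def
proof (intro CollectI allI)
  fix i
  from eventually_happens'[OF sequentially_bot eventually_conj[OF conv[of i] conv[of "i + 1"]]]
  obtain n where "q n i = p i" and "q n (i + 1) = p (i + 1)"
    by blast
  moreover have "q n i \<in> E \<and> snd (snd (q n i)) = fst (q n (i + 1))"
    using paths[of n] by (simp add: edge_shift_def)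
  ultimately show "p i \<in> E \<and> snd (snd (p i)) = fst (p (i + 1))"
    by simp
qed

lemma splice_mem_edge_shift:
  assumes "p \<in> edge_shift E" and "q \<in> edge_shift E" and "fst (q 0) = fst (p 0)"
  shows "(\<lambda>i. if i < 0 then p i else q i) \<in> edge_shift E"
  unfolding edge_shift_def
proof (intro CollectI allI conjI)
  fix i :: int
  show "(if i < 0 then p i else q i) \<in> E"
    using assms by (simp add: edge_shift_def)
  show "snd (snd (if i < 0 then p i else q i)) = fst (if i + 1 < 0 then p (i + 1) else q (i + 1))"
    using assms unfolding edge_shift_def by (cases "i = -1") auto
qed

lemma cat_append: "cat (u @ v) z = cat u (cat v z)"
  by (auto simp: cat_def fun_eq_iff nth_append)

lemma cat_map_upt: "cat (map x [0..<n]) (\<lambda>k. x (k + n)) = x"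
  by (auto simp: cat_def fun_eq_iff)

definition shift :: "(int \<Rightarrow> 'b) \<Rightarrow> int \<Rightarrow> int \<Rightarrow> 'b" where
  "shift y k = (\<lambda>i. y (i + k))"

lemma shift_shift [simp]: "shift (shift y a) b = shift y (a + b)"
  by (simp add: shift_def fun_eq_iff ac_simps)

lemma shift_0 [simp]: "shift y 0 = y"
  by (simp add: shift_def)

definition past :: "(int \<Rightarrow> 'b) \<Rightarrow> nat \<Rightarrow> 'b list" where
  "past y n = map (\<lambda>k. y (int k - int n)) [0..<n]"

lemma past_shift_snoc: "past (shift y i) n @ [y i] = past (shift y (i + 1)) (Suc n)"
proof (rule nth_equalityI)
  show "length (past (shift y i) n @ [y i]) = length (past (shift y (i + 1)) (Suc n))"
    by (simp add: past_def)
next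
  fix k assume "k < length (past (shift y i) n @ [y i])"
  then have "k < n \<or> k = n"
    by (simp add: past_def less_Suc_eq)
  then show "(past (shift y i) n @ [y i]) ! k = past (shift y (i + 1)) (Suc n) ! k"
    by (auto simp: past_def shift_def nth_append algebra_simps simp del: upt_Suc)
qed

lemma past_Suc: "past y (Suc n) = y (- int (Suc n)) # past y n"
  by (rule nth_equalityI) (auto simp: past_def nth_Cons' algebra_simps simp del: upt_Suc)

lemma lg_iso_refl:
  assumes "E \<subseteq> V \<times> UNIV \<times> V"
  shows "lg_iso V E V E"
proof -
  have "(\<lambda>(u, a, v). (id u, a, id v)) = id"
    by auto
  with assms show ?thesis
    unfolding lg_iso_def by (auto intro!: exI[of _ id])
qed

locale sofic_presentation =
  fixes E :: "('v \<times> 'a \<times> 'v) set" and Y :: "(int \<Rightarrow> 'a) set"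
  assumes finite_E: "finite E" and Y_eq: "Y = label_seq ` edge_shift E"
begin

lemma shift_mem: "y \<in> Y \<Longrightarrow> shift y k \<in> Y"
proof -
  assume "y \<in> Y"
  then obtain p where p: "p \<in> edge_shift E" "y = label_seq p"
    using Y_eq by auto
  have "shift p k \<in> edge_shift E"
    using p(1) by (auto simp: edge_shift_def shift_def algebra_simps)
  moreover have "shift y k = label_seq (shift p k)"
    using p(2) by (auto simp: shift_def label_seq_def)
  ultimately show ?thesis
    using Y_eq by auto
qed

lemma closed_under_approximation:
  assumes "\<And>n::nat. \<exists>y'\<in>Y. \<forall>i\<in>D. \<bar>i\<bar> \<le> int n \<longrightarrow> y' i = x i"
  shows "\<exists>y\<in>Y. \<forall>i\<in>D. y i = x i"
proof -
  have "\<forall>n. \<exists>p. p \<in> edge_shift E \<and> (\<forall>i\<in>D. \<bar>i\<bar> \<le> int n \<longrightarrow> label_seq p i = x i)"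
    using assms unfolding Y_eq by blast
  then obtain ps
    where "\<forall>n. ps n \<in> edge_shift E \<and> (\<forall>i\<in>D. \<bar>i\<bar> \<le> int n \<longrightarrow> label_seq (ps n) i = x i)"
    by (rule choice[THEN exE])
  then have ps: "\<And>n. ps n \<in> edge_shift E"
    and ps_x: "\<And>n i. i \<in> D \<Longrightarrow> \<bar>i\<bar> \<le> int n \<Longrightarrow> label_seq (ps n) i = x i"
    by blast+
  have ps_E: "ps n i \<in> E" for n i
    using ps by (simp add: edge_shift_def)
  obtain r p where r: "strict_mono r" and conv: "\<And>i. \<forall>\<^sub>F n in sequentially. ps (r n) i = p i"
    using pointwise_convergent_subseq_finite_range[where f = ps, OF finite_E ps_E] by blast
  have "p \<in> edge_shift E"
    by (rule pointwise_limit_mem_edge_shift[where q = "\<lambda>n. ps (r n)", OF ps conv])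
  moreover have "label_seq p i = x i" if "i \<in> D" for i
  proof -
    have "\<forall>\<^sub>F n in sequentially. \<bar>i\<bar> \<le> int (r n)"
    proof (rule eventually_sequentiallyI)
      fix n assume "nat \<bar>i\<bar> \<le> n"
      then have "\<bar>i\<bar> \<le> int n"
        by (simp add: nat_le_iff)
      also have "int n \<le> int (r n)"
        using seq_suble[OF r] by simp
      finally show "\<bar>i\<bar> \<le> int (r n)" .
    qed
    from eventually_happens'[OF sequentially_bot eventually_conj[OF conv[of i] this]]
    obtain n where "ps (r n) i = p i" and "\<bar>i\<bar> \<le> int (r n)"
      by blast
    with ps_x[OF that, of "r n"] show ?thesis
      by (simp add: label_seq_def)
  qed
  ultimately show ?thesis
    using Y_eq by blast
qed

lemma mem_Yplus_iff: "z \<in> Yplus Y \<longleftrightarrow> (\<exists>y\<in>Y. \<forall>n. y (int n) = z n)"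
  unfolding Yplus_def right_part_def image_def by (auto simp: fun_eq_iff) metis

lemma cat_mem_Yplus_iff:
  "cat w z \<in> Yplus Y \<longleftrightarrow>
     (\<exists>y\<in>Y. (\<forall>k<length w. y (int k - int (length w)) = w ! k) \<and> (\<forall>n. y (int n) = z n))"
proof
  assume "cat w z \<in> Yplus Y"
  then obtain y where y: "y \<in> Y" "\<And>m. y (int m) = cat w z m"
    unfolding mem_Yplus_iff by blast
  have "shift y (int (length w)) \<in> Y"
    using shift_mem y(1) by blast
  moreover have "\<forall>k<length w. shift y (int (length w)) (int k - int (length w)) = w ! k"
    using y(2) by (auto simp: shift_def cat_def)
  moreover have "\<forall>n. shift y (int (length w)) (int n) = z n"
    using y(2)[of "n + length w" for n] by (auto simp: shift_def cat_def)
  ultimately show "\<exists>y\<in>Y. (\<forall>k<length w. y (int k - int (length w)) = w ! k) \<and> (\<forall>n. y (int n) = z n)"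
    by blast
next
  assume "\<exists>y\<in>Y. (\<forall>k<length w. y (int k - int (length w)) = w ! k) \<and> (\<forall>n. y (int n) = z n)"
  then obtain y where y: "y \<in> Y" "\<And>k. k < length w \<Longrightarrow> y (int k - int (length w)) = w ! k"
    "\<And>n. y (int n) = z n"
    by blast
  have "shift y (- int (length w)) \<in> Y"
    using shift_mem y(1) by blast
  moreover have "shift y (- int (length w)) (int m) = cat w z m" for m
  proof (cases "m < length w")
    case True
    then show ?thesis
      using y(2)[of m] by (simp add: shift_def cat_def)
  next
    case False
    then have "int m - int (length w) = int (m - length w)"
      by simp
    then show ?thesis
      using y(3)[of "m - length w"] False by (simp add: shift_def cat_def)
  qed
  ultimately show "cat w z \<in> Yplus Y"
    unfolding mem_Yplus_iff by blast
qed

lemma cat_mem_YplusD: "cat u z \<in> Yplus Y \<Longrightarrow> z \<in> Yplus Y"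
  using cat_mem_Yplus_iff[of u z] mem_Yplus_iff[of z] by blast

lemma Fw_eq: "Fw Y u = {z. cat u z \<in> Yplus Y}"
  using cat_mem_YplusD by (auto simp: Fw_def)

lemma Fy_eq: "Fy Y y = {z. glue y z \<in> Y}"
proof -
  have "z \<in> Yplus Y" if "glue y z \<in> Y" for z
    unfolding mem_Yplus_iff using that by (intro bexI[of _ "glue y z"]) (auto simp: glue_def)
  then show ?thesis
    by (auto simp: Fy_def)
qed

lemma mem_words_iff: "u \<in> words Y \<longleftrightarrow> (\<exists>z. cat u z \<in> Yplus Y)"
proof
  assume "u \<in> words Y"
  then obtain y i where y: "y \<in> Y" "\<And>k. k < length u \<Longrightarrow> y (i + int k) = u ! k"
    unfolding words_def occurs_def by blast
  have "shift y (i + int (length u)) \<in> Y"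
    using shift_mem y(1) by blast
  moreover have "\<forall>k<length u. shift y (i + int (length u)) (int k - int (length u)) = u ! k"
    using y(2) by (simp add: shift_def add.commute)
  ultimately have "cat u (\<lambda>n. shift y (i + int (length u)) (int n)) \<in> Yplus Y"
    unfolding cat_mem_Yplus_iff by blast
  then show "\<exists>z. cat u z \<in> Yplus Y"
    by blast
next
  assume "\<exists>z. cat u z \<in> Yplus Y"
  then obtain y where "y \<in> Y" "\<And>k. k < length u \<Longrightarrow> y (int k - int (length u)) = u ! k"
    unfolding cat_mem_Yplus_iff by blast
  then show "u \<in> words Y"
    unfolding words_def occurs_def
    by (intro CollectI bexI[of _ y] exI[of _ "- int (length u)"]) (auto simp: add.commute)
qed

lemma Fw_eq_empty_iff: "Fw Y u = {} \<longleftrightarrow> u \<notin> words Y"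
  by (simp add: Fw_eq mem_words_iff)

lemma Fw_snoc: "Fw Y (u @ [a]) = {z. cat [a] z \<in> Fw Y u}"
  unfolding Fw_eq cat_append using cat_mem_YplusD by auto

lemma Fw_append_subset: "Fw Y (v @ u) \<subseteq> Fw Y u"
  unfolding Fw_eq cat_append using cat_mem_YplusD by auto

definition ending_vertices :: "'a list \<Rightarrow> 'v set" where
  "ending_vertices w = {fst (p 0) | p. p \<in> edge_shift E \<and>
     (\<forall>k<length w. label_seq p (int k - int (length w)) = w ! k)}"

definition path_future :: "'v \<Rightarrow> (nat \<Rightarrow> 'a) set" where
  "path_future v = {right_part (label_seq p) | p. p \<in> edge_shift E \<and> fst (p 0) = v}"

lemma Fw_eq_UN_path_future: "Fw Y w = (\<Union>v\<in>ending_vertices w. path_future v)"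
proof (intro equalityI subsetI)
  fix z assume "z \<in> Fw Y w"
  then obtain y where y: "y \<in> Y" "\<forall>k<length w. y (int k - int (length w)) = w ! k"
    "\<forall>n. y (int n) = z n"
    unfolding Fw_eq cat_mem_Yplus_iff by blast
  then obtain p where p: "p \<in> edge_shift E" "y = label_seq p"
    using Y_eq by auto
  have "fst (p 0) \<in> ending_vertices w"
    unfolding ending_vertices_def using p y(2) by blast
  moreover have "z = right_part (label_seq p)"
    using p(2) y(3) by (simp add: right_part_def fun_eq_iff)
  then have "z \<in> path_future (fst (p 0))"
    unfolding path_future_def using p(1) by blast
  ultimately show "z \<in> (\<Union>v\<in>ending_vertices w. path_future v)"
    by blast
next
  fix z assume "z \<in> (\<Union>v\<in>ending_vertices w. path_future v)"
  then obtain p q where p: "p \<in> edge_shift E"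
    "\<forall>k<length w. label_seq p (int k - int (length w)) = w ! k"
    and q: "q \<in> edge_shift E" "fst (q 0) = fst (p 0)" "z = right_part (label_seq q)"
    unfolding ending_vertices_def path_future_def by blast
  define pq where "pq = (\<lambda>i. if i < 0 then p i else q i)"
  have "label_seq pq \<in> Y"
    using splice_mem_edge_shift[OF p(1) q(1,2)] Y_eq by (simp add: pq_def)
  moreover have "\<forall>k<length w. label_seq pq (int k - int (length w)) = w ! k"
    using p(2) by (simp add: pq_def label_seq_def)
  moreover have "\<forall>n. label_seq pq (int n) = z n"
    using q(3) by (simp add: pq_def label_seq_def right_part_def)
  ultimately show "z \<in> Fw Y w"
    unfolding Fw_eq cat_mem_Yplus_iff by blast
qed

lemma finite_range_Fw: "finite (range (Fw Y))"
proof (rule finite_subset)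
  have "ending_vertices w \<subseteq> fst ` E" for w
    unfolding ending_vertices_def edge_shift_def by blast
  then show "range (Fw Y) \<subseteq> (\<lambda>S. \<Union>v\<in>S. path_future v) ` Pow (fst ` E)"
    using Fw_eq_UN_path_future by blast
  show "finite ((\<lambda>S. \<Union>v\<in>S. path_future v) ` Pow (fst ` E))"
    using finite_E by simp
qed

lemma cat_past_mem_Yplus_iff:
  "cat (past y n) z \<in> Yplus Y \<longleftrightarrow>
     (\<exists>y'\<in>Y. (\<forall>i. - int n \<le> i \<and> i < 0 \<longrightarrow> y' i = y i) \<and> (\<forall>m. y' (int m) = z m))"
proof -
  have "(\<forall>k<length (past y n). y' (int k - int (length (past y n))) = past y n ! k) \<longleftrightarrow>
        (\<forall>i. - int n \<le> i \<and> i < 0 \<longrightarrow> y' i = y i)" for y'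
  proof
    assume past: "\<forall>k<length (past y n). y' (int k - int (length (past y n))) = past y n ! k"
    show "\<forall>i. - int n \<le> i \<and> i < 0 \<longrightarrow> y' i = y i"
    proof (intro allI impI)
      fix i assume i: "- int n \<le> i \<and> i < 0"
      then have "nat (i + int n) < n" and "int (nat (i + int n)) - int n = i"
        by auto
      then show "y' i = y i"
        using past[rule_format, of "nat (i + int n)"] by (simp add: past_def)
    qed
  qed (auto simp: past_def)
  then show ?thesis
    unfolding cat_mem_Yplus_iff by simp
qed

lemma Fy_subset_Fw_past: "Fy Y y \<subseteq> Fw Y (past y n)"
proof
  fix z assume "z \<in> Fy Y y"
  then have "glue y z \<in> Y"
    by (simp add: Fy_eq)
  then show "z \<in> Fw Y (past y n)"
    unfolding Fw_eq cat_past_mem_Yplus_iff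
    by (intro CollectI bexI[of _ "glue y z"]) (auto simp: glue_def)
qed

lemma mem_Fy_if_mem_Fw_past:
  assumes "\<And>n. z \<in> Fw Y (past y n)"
  shows "z \<in> Fy Y y"
proof -
  have "\<exists>y'\<in>Y. \<forall>i\<in>UNIV. y' i = glue y z i"
  proof (rule closed_under_approximation)
    fix n
    from assms[of n] obtain y' where y': "y' \<in> Y" "\<forall>i. - int n \<le> i \<and> i < 0 \<longrightarrow> y' i = y i"
      "\<forall>m. y' (int m) = z m"
      unfolding Fw_eq cat_past_mem_Yplus_iff by blast
    have "y' i = glue y z i" if "\<bar>i\<bar> \<le> int n" for i
      using that y'(2) y'(3)[rule_format, of "nat i"] by (cases "i < 0") (auto simp: glue_def)
    with y'(1) show "\<exists>y'\<in>Y. \<forall>i\<in>UNIV. \<bar>i\<bar> \<le> int n \<longrightarrow> y' i = glue y z i"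
      by blast
  qed
  then have "glue y z \<in> Y"
    by (metis UNIV_I ext)
  then show ?thesis
    by (simp add: Fy_eq)
qed

lemma Fy_eq_INT_Fw_past: "Fy Y y = (\<Inter>n. Fw Y (past y n))"
proof (intro equalityI subsetI)
  show "z \<in> (\<Inter>n. Fw Y (past y n))" if "z \<in> Fy Y y" for z
    using that Fy_subset_Fw_past by blast
  show "z \<in> Fy Y y" if "z \<in> (\<Inter>n. Fw Y (past y n))" for z
    using that by (intro mem_Fy_if_mem_Fw_past) blast
qed

lemma decseq_Fw_past: "decseq (\<lambda>n. Fw Y (past y n))"
proof (rule decseq_SucI)
  fix n
  show "Fw Y (past y (Suc n)) \<subseteq> Fw Y (past y n)"
    using Fw_append_subset[of "[y (- int (Suc n))]" "past y n"] by (simp add: past_Suc)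
qed

lemma eventually_Fy_eq_Fw_past: "\<forall>\<^sub>F n in sequentially. Fy Y y = Fw Y (past y n)"
proof -
  have "finite (range (\<lambda>n. Fw Y (past y n)))"
    by (rule finite_subset[OF _ finite_range_Fw]) auto
  with decseq_Fw_past have "\<forall>\<^sub>F n in sequentially. Fw Y (past y n) = (\<Inter>m. Fw Y (past y m))"
    by (rule decseq_finite_range_eventually_eq_INF)
  then show ?thesis
    by (rule eventually_mono) (simp add: Fy_eq_INT_Fw_past)
qed

lemma past_mem_words: "y \<in> Y \<Longrightarrow> past y n \<in> words Y"
  unfolding words_def occurs_def
  by (intro CollectI bexI[of _ y] exI[of _ "- int n"]) (auto simp: past_def add.commute)

lemma Fy_mem_fsg_vertices:
  assumes "y \<in> Y"
  shows "Fy Y y \<in> fsg_vertices Y"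
proof -
  obtain n where "Fy Y y = Fw Y (past y n)"
    using eventually_happens'[OF sequentially_bot eventually_Fy_eq_Fw_past] by blast
  with past_mem_words[OF assms] show ?thesis
    unfolding fsg_vertices_def by blast
qed

lemma fsg_edge_source:
  assumes "(u, a, v) \<in> fsg_edges Y"
  shows "u \<in> fsg_vertices Y"
proof -
  obtain w where u: "u = Fw Y w" and "w @ [a] \<in> words Y"
    using assms unfolding fsg_edges_def by blast
  then have "w \<in> words Y"
    unfolding mem_words_iff cat_append by blast
  with u show ?thesis
    unfolding fsg_vertices_def by blast
qed

lemma fsg_edge_target: "(u, a, v) \<in> fsg_edges Y \<Longrightarrow> v = {z. cat [a] z \<in> u}"
  unfolding fsg_edges_def using Fw_snoc by auto

lemma fsg_vertex_nonempty: "u \<in> fsg_vertices Y \<Longrightarrow> u \<noteq> {}"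
  unfolding fsg_vertices_def using Fw_eq_empty_iff by auto

lemma fsg_rpath_vertex:
  assumes "rpath (fsg_edges Y) p" and "fst (p 0) = Fw Y w"
  shows "fst (p n) = Fw Y (w @ map (\<lambda>k. fst (snd (p k))) [0..<n])"
proof (induction n)
  case 0
  show ?case
    using assms(2) by simp
next
  case (Suc n)
  obtain u a v where e: "p n = (u, a, v)"
    by (cases "p n")
  have "(u, a, v) \<in> fsg_edges Y" and "fst (p (Suc n)) = v"
    using assms(1) e by (auto simp: rpath_def dest: spec[of _ n])
  then have "fst (p (Suc n)) = {z. cat [a] z \<in> u}"
    using fsg_edge_target by simp
  also have "\<dots> = Fw Y ((w @ map (\<lambda>k. fst (snd (p k))) [0..<n]) @ [a])"
    using Suc e by (simp only: Fw_snoc fst_conv)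
  finally show ?case
    using e by simp
qed

lemma mem_Fw_if_prefix_words:
  assumes "\<And>n. w @ map x [0..<n] \<in> words Y"
  shows "x \<in> Fw Y w"
proof -
  \<comment> \<open>the point wx with w ending at -1; its values left of -length w are irrelevant\<close>
  define t where "t i = (if i < 0 then w ! nat (i + int (length w)) else x (nat i))" for i
  have "\<exists>y\<in>Y. \<forall>i\<in>{- int (length w)..}. y i = t i"
  proof (rule closed_under_approximation)
    fix n
    obtain z where "cat (w @ map x [0..<Suc n]) z \<in> Yplus Y"
      using assms mem_words_iff by blast
    then obtain y' where y': "y' \<in> Y" "\<forall>k<length w. y' (int k - int (length w)) = w ! k"
      "\<forall>m. y' (int m) = cat (map x [0..<Suc n]) z m"
      unfolding cat_append cat_mem_Yplus_iff by blast
    have "y' i = t i" if "i \<ge> - int (length w)" and "\<bar>i\<bar> \<le> int n" for i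
    proof (cases "i < 0")
      case True
      then have k: "nat (i + int (length w)) < length w" "int (nat (i + int (length w))) - int (length w) = i"
        using that by auto
      show ?thesis
        using y'(2)[rule_format, OF k(1)] True unfolding k(2) by (simp add: t_def)
    next
      case False
      then have "nat i < Suc n"
        using that by simp
      then show ?thesis
        using y'(3)[rule_format, of "nat i"] False by (simp add: t_def cat_def del: upt_Suc)
    qed
    with y'(1) show "\<exists>y'\<in>Y. \<forall>i\<in>{- int (length w)..}. \<bar>i\<bar> \<le> int n \<longrightarrow> y' i = t i"
      by auto
  qed
  then obtain y where y: "y \<in> Y" "\<And>i. i \<ge> - int (length w) \<Longrightarrow> y i = t i"
    by auto
  have "\<forall>k<length w. y (int k - int (length w)) = w ! k"
    using y(2) by (auto simp: t_def)
  moreover have "\<forall>m. y (int m) = x m"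
    using y(2) by (auto simp: t_def)
  ultimately show ?thesis
    unfolding Fw_eq cat_mem_Yplus_iff using y(1) by blast
qed

lemma fH_fsg_subset:
  assumes "v \<in> fsg_vertices Y"
  shows "fH (fsg_edges Y) v \<subseteq> v"
proof
  fix x assume "x \<in> fH (fsg_edges Y) v"
  then obtain p where p: "rpath (fsg_edges Y) p" "fst (p 0) = v" and x: "x = (\<lambda>n. fst (snd (p n)))"
    unfolding fH_def by blast
  obtain w where w: "v = Fw Y w"
    using assms unfolding fsg_vertices_def by blast
  have "w @ map x [0..<n] \<in> words Y" for n
  proof -
    have "p n \<in> fsg_edges Y"
      using p(1) by (simp add: rpath_def)
    then have "fst (p n) \<noteq> {}"
      using fsg_edge_source fsg_vertex_nonempty by (metis prod.collapse)
    then show ?thesis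
      using fsg_rpath_vertex[OF p(1)] p(2) w x Fw_eq_empty_iff by simp
  qed
  then show "x \<in> v"
    using mem_Fw_if_prefix_words w by blast
qed

lemma fsg_subset_fH:
  assumes "v \<in> fsg_vertices Y"
  shows "v \<subseteq> fH (fsg_edges Y) v"
proof
  fix x assume "x \<in> v"
  obtain w where w: "v = Fw Y w"
    using assms unfolding fsg_vertices_def by blast
  define p where "p n = (Fw Y (w @ map x [0..<n]), x n, Fw Y (w @ map x [0..<Suc n]))" for n
  have "p n \<in> fsg_edges Y" for n
  proof -
    have "cat (w @ map x [0..<Suc n]) (\<lambda>k. x (k + Suc n)) = cat w x"
      by (simp only: cat_append cat_map_upt)
    moreover have "cat w x \<in> Yplus Y"
      using \<open>x \<in> v\<close> w by (simp add: Fw_eq)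
    ultimately have "(w @ map x [0..<n]) @ [x n] \<in> words Y"
      unfolding mem_words_iff by (metis append_assoc map_append upt_Suc_append list.map zero_le)
    then show ?thesis
      unfolding fsg_edges_def p_def by fastforce
  qed
  then have "rpath (fsg_edges Y) p"
    by (simp add: rpath_def p_def)
  moreover have "fst (p 0) = v" and "x = (\<lambda>n. fst (snd (p n)))"
    using w by (simp_all add: p_def)
  ultimately show "x \<in> fH (fsg_edges Y) v"
    unfolding fH_def by blast
qed

lemma fH_fsg_eq: "v \<in> fsg_vertices Y \<Longrightarrow> fH (fsg_edges Y) v = v"
  using fH_fsg_subset fsg_subset_fH by blast

lemma fsg_rpath_labels_mem_Yplus:
  assumes "rpath (fsg_edges Y) q"
  shows "(\<lambda>k. fst (snd (q k))) \<in> Yplus Y"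
proof -
  have "q 0 \<in> fsg_edges Y"
    using assms by (simp add: rpath_def)
  then have source: "fst (q 0) \<in> fsg_vertices Y"
    by (intro fsg_edge_source[of _ "fst (snd (q 0))" "snd (snd (q 0))"]) simp
  from assms have "(\<lambda>k. fst (snd (q k))) \<in> fH (fsg_edges Y) (fst (q 0))"
    unfolding fH_def by blast
  also have "\<dots> \<subseteq> fst (q 0)"
    using source by (rule fH_fsg_subset)
  also have "\<dots> \<subseteq> Yplus Y"
    using source unfolding fsg_vertices_def Fw_def by auto
  finally show ?thesis .
qed

lemma label_seq_fsg_mem:
  assumes "z \<in> edge_shift (fsg_edges Y)"
  shows "label_seq z \<in> Y"
proof -
  have "\<exists>y\<in>Y. \<forall>i\<in>UNIV. y i = label_seq z i"
  proof (rule closed_under_approximation)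
    fix n
    define q where "q k = z (int k - int n)" for k
    have "rpath (fsg_edges Y) q"
      using assms by (simp add: rpath_def edge_shift_def q_def) (simp add: algebra_simps)
    then obtain y where y: "y \<in> Y" "\<And>k. y (int k) = fst (snd (q k))"
      using fsg_rpath_labels_mem_Yplus unfolding mem_Yplus_iff by blast
    have "shift y (int n) i = label_seq z i" if "\<bar>i\<bar> \<le> int n" for i
    proof -
      have "i + int n = int (nat (i + int n))"
        using that by simp
      then show ?thesis
        using y(2)[of "nat (i + int n)"] by (simp add: shift_def q_def label_seq_def)
    qed
    with shift_mem[OF y(1)] show "\<exists>y\<in>Y. \<forall>i\<in>UNIV. \<bar>i\<bar> \<le> int n \<longrightarrow> y i = label_seq z i"
      by blast
  qed
  then show ?thesis
    by (metis UNIV_I ext)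
qed

lemma Fy_shift_fsg_edge:
  assumes "y \<in> Y"
  shows "(Fy Y (shift y i), y i, Fy Y (shift y (i + 1))) \<in> fsg_edges Y"
proof -
  have "\<forall>\<^sub>F n in sequentially. Fy Y (shift y (i + 1)) = Fw Y (past (shift y (i + 1)) (Suc n))"
    using eventually_sequentially_Suc[THEN iffD2, OF eventually_Fy_eq_Fw_past[of "shift y (i + 1)"]] .
  with eventually_Fy_eq_Fw_past[of "shift y i"]
  have "\<forall>\<^sub>F n in sequentially. Fy Y (shift y i) = Fw Y (past (shift y i) n) \<and>
      Fy Y (shift y (i + 1)) = Fw Y (past (shift y (i + 1)) (Suc n))"
    by (rule eventually_conj)
  then obtain n where source: "Fy Y (shift y i) = Fw Y (past (shift y i) n)"
    and target: "Fy Y (shift y (i + 1)) = Fw Y (past (shift y (i + 1)) (Suc n))"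
    using eventually_happens'[OF sequentially_bot] by blast
  have "past (shift y i) n @ [y i] \<in> words Y"
    unfolding past_shift_snoc by (rule past_mem_words[OF shift_mem[OF assms]])
  then show ?thesis
    unfolding fsg_edges_def source target past_shift_snoc[symmetric] by blast
qed

lemma reg_vertices_fsg_eq: "reg_vertices Y (fsg_vertices Y) (fsg_edges Y) = fc_vertices Y"
proof (intro equalityI subsetI)
  fix v assume "v \<in> reg_vertices Y (fsg_vertices Y) (fsg_edges Y)"
  then obtain z where v: "v \<in> fsg_vertices Y" "z \<in> edge_shift (fsg_edges Y)"
    "fH (fsg_edges Y) v = Fy Y (label_seq z)"
    unfolding reg_vertices_def regular_def by blast
  then have "v = Fy Y (label_seq z)"
    using fH_fsg_eq by simp
  then show "v \<in> fc_vertices Y"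
    unfolding fc_vertices_def using label_seq_fsg_mem[OF v(2)] by blast
next
  fix v assume "v \<in> fc_vertices Y"
  then obtain y where y: "y \<in> Y" "v = Fy Y y"
    unfolding fc_vertices_def by blast
  define z where "z i = (Fy Y (shift y i), y i, Fy Y (shift y (i + 1)))" for i
  have "z \<in> edge_shift (fsg_edges Y)"
    using Fy_shift_fsg_edge[OF y(1)] by (simp add: edge_shift_def z_def)
  moreover have "label_seq z = y" and "snd (snd (z (-1))) = v"
    using y(2) by (simp_all add: label_seq_def z_def)
  moreover have "v \<in> fsg_vertices Y"
    using Fy_mem_fsg_vertices y by simp
  ultimately show "v \<in> reg_vertices Y (fsg_vertices Y) (fsg_edges Y)"
    unfolding reg_vertices_def regular_def using fH_fsg_eq y(2) by auto
qed

lemma right_part_mem_Fy: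
  assumes "y \<in> Y"
  shows "right_part y \<in> Fy Y y"
proof -
  have "glue y (right_part y) = y"
    by (auto simp: glue_def right_part_def fun_eq_iff)
  with assms show ?thesis
    by (simp add: Fy_eq)
qed

lemma Fy_shift_glue_cat: "Fy Y (shift (glue y (cat [a] w)) 1) = {z. cat [a] z \<in> Fy Y y}"
proof -
  have glue_eq: "glue (shift (glue y (cat [a] w)) 1) z = shift (glue y (cat [a] z)) 1" for z
    by (auto simp: glue_def shift_def cat_def fun_eq_iff nat_add_distrib)
  have "glue (shift (glue y (cat [a] w)) 1) z \<in> Y \<longleftrightarrow> glue y (cat [a] z) \<in> Y" for z
  proof
    assume "glue (shift (glue y (cat [a] w)) 1) z \<in> Y"
    then have "shift (shift (glue y (cat [a] z)) 1) (-1) \<in> Y"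
      unfolding glue_eq by (rule shift_mem)
    then show "glue y (cat [a] z) \<in> Y"
      by simp
  next
    assume "glue y (cat [a] z) \<in> Y"
    then show "glue (shift (glue y (cat [a] w)) 1) z \<in> Y"
      unfolding glue_eq by (rule shift_mem)
  qed
  then show ?thesis
    by (simp add: Fy_eq)
qed

lemma reg_edges_fsg_subset_fc_edges: "reg_edges Y (fsg_vertices Y) (fsg_edges Y) \<subseteq> fc_edges Y"
proof
  fix e assume "e \<in> reg_edges Y (fsg_vertices Y) (fsg_edges Y)"
  then have e_fsg: "e \<in> fsg_edges Y" and "fst e \<in> fc_vertices Y"
    unfolding reg_edges_def reg_vertices_fsg_eq by auto
  then obtain y where y: "y \<in> Y" "fst e = Fy Y y"
    unfolding fc_vertices_def by blast
  from e_fsg obtain u a where e: "e = (Fw Y u, a, Fw Y (u @ [a]))" "u @ [a] \<in> words Y"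
    unfolding fsg_edges_def by blast
  have u: "Fw Y u = Fy Y y"
    using y e by simp
  obtain w where "cat u (cat [a] w) \<in> Yplus Y"
    using e(2) unfolding mem_words_iff cat_append by blast
  then have "cat [a] w \<in> Fw Y u"
    by (simp add: Fw_eq)
  then have "glue y (cat [a] w) \<in> Y"
    by (simp add: u Fy_eq)
  then have "shift (glue y (cat [a] w)) 1 \<in> Y"
    by (rule shift_mem)
  moreover have "Fw Y (u @ [a]) = Fy Y (shift (glue y (cat [a] w)) 1)"
    using u by (simp add: Fw_snoc Fy_shift_glue_cat)
  ultimately show "e \<in> fc_edges Y"
    unfolding fc_edges_def using e(1) u y(1) Fy_shift_glue_cat by blast
qed

lemma fc_edges_subset_reg_edges_fsg: "fc_edges Y \<subseteq> reg_edges Y (fsg_vertices Y) (fsg_edges Y)"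
proof
  fix e assume "e \<in> fc_edges Y"
  then obtain y z a where e: "e = (Fy Y y, a, Fy Y z)" "y \<in> Y" "z \<in> Y"
    "Fy Y z = {w. cat [a] w \<in> Fy Y y}"
    unfolding fc_edges_def by blast
  obtain n where n: "Fy Y y = Fw Y (past y n)"
    using eventually_happens'[OF sequentially_bot eventually_Fy_eq_Fw_past] by blast
  then have target: "Fw Y (past y n @ [a]) = Fy Y z"
    using e(4) by (simp add: Fw_snoc)
  then have "past y n @ [a] \<in> words Y"
    using right_part_mem_Fy[OF e(3)] Fw_eq_empty_iff by blast
  then have "e \<in> fsg_edges Y"
    unfolding fsg_edges_def e(1) n target[symmetric] by blast
  then show "e \<in> reg_edges Y (fsg_vertices Y) (fsg_edges Y)"
    unfolding reg_edges_def reg_vertices_fsg_eq fc_vertices_def using e(1,2) by auto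
qed

lemma reg_edges_fsg_eq: "reg_edges Y (fsg_vertices Y) (fsg_edges Y) = fc_edges Y"
  using reg_edges_fsg_subset_fc_edges fc_edges_subset_reg_edges_fsg by (rule equalityI)

end

theorem proposition3p16:
  fixes Y :: "(int \<Rightarrow> 'a::finite) set"
  assumes "sofic Y"
  shows "lg_iso (fc_vertices Y) (fc_edges Y)
           (reg_vertices Y (fsg_vertices Y) (fsg_edges Y))
           (reg_edges Y (fsg_vertices Y) (fsg_edges Y))"
proof -
  obtain E :: "(nat \<times> 'a \<times> nat) set" where "finite E" and "Y = label_seq ` edge_shift E"
    using assms unfolding sofic_def by blast
  then interpret sofic_presentation E Y
    by unfold_locales
  have "fc_edges Y \<subseteq> fc_vertices Y \<times> UNIV \<times> fc_vertices Y"
    unfolding fc_edges_def fc_vertices_def by auto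
  then show ?thesis
    unfolding reg_vertices_fsg_eq reg_edges_fsg_eq by (rule lg_iso_refl)
qed

end
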